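(* Let $n\ge2$ and let $P_X$ be a probability distribution on $[0,1]$ with $P_X((0,1))>0$. Let $q_y:=\int\binom{n}{y}x^y(1-x)^{n-y}\,dP_X(x)$, $y=0,\dots,n$, be the induced output pmf. Then $q_y>0$ for all $y$, and for every $y\in\{1,\dots,n-1\}$, \[ \frac{q_{y+1}\,q_{y-1}}{q_y^2}\ \ge\ \frac{y(n-y)}{(y+1)(n-y+1)}. \] *)

theory Defs
  imports "HOL-Probability.Probability"
begin

definition binom_out :: "real measure \<Rightarrow> nat \<Rightarrow> nat \<Rightarrow> real" where
  "binom_out M n y = (\<integral>x. real (n choose y) * x ^ y * (1 - x) ^ (n - y) \<partial>M)"

end

theory Submission
  imports Defs
begin

text \<open>Write q_y = (n choose y) m_y with m_y = \<integral> x^y (1-x)^(n-y) dP_X. The Cauchy-Schwarz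
  inequality for the weight x^(y-1) (1-x)^(n-y-1), applied to x and 1 - x, makes the moments
  log-concave: m_y^2 \<le> m_(y+1) m_(y-1). The claimed bound is exactly the ratio
  (n choose y+1) (n choose y-1) / (n choose y)^2 of the binomial coefficients. All m_y are
  positive because P_X charges (0,1), where every integrand is positive.\<close>

lemma discriminant_nonpos_of_nonneg:
  fixes a b c :: real
  assumes "0 \<le> a" and nonneg: "\<And>t. 0 \<le> a * t\<^sup>2 - 2 * b * t + c"
  shows "b\<^sup>2 \<le> a * c"
proof (cases "a = 0")
  case True
  have "b = 0"
  proof (rule ccontr)
    assume "b \<noteq> 0"
    then show False using nonneg[of "(c + 1) / (2 * b)"] True by (simp add: field_simps)
  qed
  then show ?thesis using True by simp
next
  case False
  have "0 \<le> a * (b / a)\<^sup>2 - 2 * b * (b / a) + c" by (rule nonneg)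
  also have "\<dots> = (a * c - b\<^sup>2) / a" using False by (simp add: field_simps power2_eq_square)
  finally show ?thesis using \<open>0 \<le> a\<close> False by (simp add: zero_le_divide_iff)
qed

lemma weighted_Cauchy_Schwarz_integral:
  fixes w u v :: "'a \<Rightarrow> real"
  assumes int_uu: "integrable M (\<lambda>x. w x * (u x)\<^sup>2)"
    and int_uv: "integrable M (\<lambda>x. w x * u x * v x)"
    and int_vv: "integrable M (\<lambda>x. w x * (v x)\<^sup>2)"
    and w_nonneg: "AE x in M. 0 \<le> w x"
  shows "(\<integral>x. w x * u x * v x \<partial>M)\<^sup>2 \<le> (\<integral>x. w x * (u x)\<^sup>2 \<partial>M) * (\<integral>x. w x * (v x)\<^sup>2 \<partial>M)"
proof (rule discriminant_nonpos_of_nonneg)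
  show "0 \<le> (\<integral>x. w x * (u x)\<^sup>2 \<partial>M)"
    using w_nonneg by (auto intro!: integral_nonneg_AE elim!: eventually_mono)
  fix t :: real
  have "0 \<le> (\<integral>x. w x * (t * u x - v x)\<^sup>2 \<partial>M)"
    using w_nonneg by (auto intro!: integral_nonneg_AE elim!: eventually_mono)
  also have "(\<lambda>x. w x * (t * u x - v x)\<^sup>2)
      = (\<lambda>x. t\<^sup>2 * (w x * (u x)\<^sup>2) - 2 * t * (w x * u x * v x) + w x * (v x)\<^sup>2)"
    by (simp add: power2_eq_square algebra_simps)
  also have "integral\<^sup>L M \<dots> = t\<^sup>2 * (\<integral>x. w x * (u x)\<^sup>2 \<partial>M)
      - 2 * t * (\<integral>x. w x * u x * v x \<partial>M) + (\<integral>x. w x * (v x)\<^sup>2 \<partial>M)"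
    using int_uu int_uv int_vv by simp
  finally show "0 \<le> (\<integral>x. w x * (u x)\<^sup>2 \<partial>M) * t\<^sup>2
      - 2 * (\<integral>x. w x * u x * v x \<partial>M) * t + (\<integral>x. w x * (v x)\<^sup>2 \<partial>M)"
    by (simp only: mult_ac)
qed

lemma choose_Suc_times_Suc: "(n choose Suc k) * Suc k = (n choose k) * (n - k)"
proof (cases n)
  case (Suc m)
  have "(n choose Suc k) * Suc k = Suc m * (m choose k)"
    using Suc Suc_times_binomial_eq[of m k] by simp
  also have "\<dots> = (n - k) * (n choose k)"
    using binomial_absorb_comp[of n k] Suc by simp
  finally show ?thesis by simp
qed simp

lemma binomial_ratio_identity:
  assumes "0 < k" "k \<le> n"
  shows "(n choose (k + 1)) * (n choose (k - 1)) * ((k + 1) * (n - k + 1))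
    = (n choose k)\<^sup>2 * (k * (n - k))"
proof -
  obtain a where k: "k = Suc a" using assms(1) by (cases k) auto
  have "k + 1 = Suc (Suc a)" "k - 1 = a" "n - k + 1 = n - a" using assms k by simp_all
  then have "(n choose (k + 1)) * (n choose (k - 1)) * ((k + 1) * (n - k + 1))
      = ((n choose Suc (Suc a)) * Suc (Suc a)) * ((n choose a) * (n - a))"
    by (simp only: mult_ac)
  also have "\<dots> = ((n choose Suc a) * (n - Suc a)) * ((n choose Suc a) * Suc a)"
    by (simp only: choose_Suc_times_Suc)
  also have "\<dots> = (n choose k)\<^sup>2 * (k * (n - k))"
    unfolding k power2_eq_square by (simp only: mult_ac)
  finally show ?thesis .
qed

lemma binom_out_eq_choose_times_integral:
  "binom_out M n k = real (n choose k) * (\<integral>x. x ^ k * (1 - x) ^ (n - k) \<partial>M)"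
  unfolding binom_out_def by (simp add: mult.assoc)

lemma integrable_power_mult_one_minus_power:
  fixes M :: "real measure"
  assumes "finite_measure M" "sets M = sets borel" and support: "AE x in M. x \<in> {0..1}"
  shows "integrable M (\<lambda>x. x ^ a * (1 - x) ^ b)"
proof (rule finite_measure.integrable_const_bound[OF assms(1), where B = 1])
  show "AE x in M. norm (x ^ a * (1 - x) ^ b) \<le> 1"
    using support
  proof eventually_elim
    case (elim x)
    then have "0 \<le> x ^ a * (1 - x) ^ b" "x ^ a * (1 - x) ^ b \<le> 1"
      by (simp_all add: power_le_one mult_le_one)
    then show ?case by simp
  qed
  show "(\<lambda>x. x ^ a * (1 - x) ^ b) \<in> borel_measurable M"
    unfolding measurable_cong_sets[OF assms(2) refl] by measurable
qed

lemma integral_power_mult_one_minus_power_pos: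
  fixes M :: "real measure"
  assumes "finite_measure M" "sets M = sets borel" "AE x in M. x \<in> {0..1}"
    and interior: "measure M {0<..<1} > 0"
  shows "(\<integral>x. x ^ a * (1 - x) ^ b \<partial>M) > 0"
proof -
  have nonneg: "AE x in M. 0 \<le> x ^ a * (1 - x) ^ b"
    using assms(3) by eventually_elim simp
  have "\<not> (AE x in M. x ^ a * (1 - x) ^ b = 0)"
  proof
    assume "AE x in M. x ^ a * (1 - x) ^ b = 0"
    then have "AE x in M. x \<notin> {0<..<1}"
      by eventually_elim auto
    then have "{0<..<1} \<in> null_sets M"
      using AE_iff_null_sets[of "{0<..<1}" M] assms(2) by simp
    then show False
      using interior by (simp add: measure_def null_setsD1)
  qed
  then have "(\<integral>x. x ^ a * (1 - x) ^ b \<partial>M) \<noteq> 0"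
    using integral_nonneg_eq_0_iff_AE[OF integrable_power_mult_one_minus_power[OF assms(1-3)] nonneg]
    by simp
  moreover have "(\<integral>x. x ^ a * (1 - x) ^ b \<partial>M) \<ge> 0"
    using nonneg by (rule integral_nonneg_AE)
  ultimately show ?thesis by simp
qed

lemma integral_power_mult_one_minus_power_log_concave:
  fixes M :: "real measure"
  assumes "finite_measure M" "sets M = sets borel" and support: "AE x in M. x \<in> {0..1}"
  shows "(\<integral>x. x ^ Suc a * (1 - x) ^ Suc b \<partial>M)\<^sup>2
    \<le> (\<integral>x. x ^ Suc (Suc a) * (1 - x) ^ b \<partial>M) * (\<integral>x. x ^ a * (1 - x) ^ Suc (Suc b) \<partial>M)"
proof -
  define w where "w x = x ^ a * (1 - x) ^ b" for x :: real
  have uv: "(\<lambda>x. w x * x * (1 - x)) = (\<lambda>x. x ^ Suc a * (1 - x) ^ Suc b)"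
    and uu: "(\<lambda>x. w x * x\<^sup>2) = (\<lambda>x. x ^ Suc (Suc a) * (1 - x) ^ b)"
    and vv: "(\<lambda>x. w x * (1 - x)\<^sup>2) = (\<lambda>x. x ^ a * (1 - x) ^ Suc (Suc b))"
    by (simp_all add: w_def power2_eq_square mult_ac)
  have "(\<integral>x. w x * x * (1 - x) \<partial>M)\<^sup>2 \<le> (\<integral>x. w x * x\<^sup>2 \<partial>M) * (\<integral>x. w x * (1 - x)\<^sup>2 \<partial>M)"
  proof (rule weighted_Cauchy_Schwarz_integral)
    show "AE x in M. 0 \<le> w x"
      using support by eventually_elim (simp add: w_def)
  qed (simp_all only: uv uu vv integrable_power_mult_one_minus_power[OF assms])
  then show ?thesis
    by (simp only: uv uu vv)
qed

lemma binom_out_pos: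
  fixes M :: "real measure"
  assumes "finite_measure M" "sets M = sets borel" "AE x in M. x \<in> {0..1}"
    and "measure M {0<..<1} > 0" and "y \<le> n"
  shows "binom_out M n y > 0"
  using integral_power_mult_one_minus_power_pos[OF assms(1-4)] assms(5)
  by (simp add: binom_out_eq_choose_times_integral)

lemma binom_out_ratio_ge:
  fixes M :: "real measure"
  assumes "finite_measure M" "sets M = sets borel" "AE x in M. x \<in> {0..1}"
    and "measure M {0<..<1} > 0" and "0 < y" "y < n"
  shows "binom_out M n (y + 1) * binom_out M n (y - 1) / (binom_out M n y)\<^sup>2
    \<ge> real (y * (n - y)) / real ((y + 1) * (n - y + 1))"
proof -
  obtain a where y: "y = Suc a"
    using assms(5) by (cases y) auto
  obtain b where ny: "n - y = Suc b"
    using assms(6) by (cases "n - y") auto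
  define m where "m i j = (\<integral>x. x ^ i * (1 - x) ^ j \<partial>M)" for i j
  have m_pos: "m i j > 0" for i j
    unfolding m_def by (rule integral_power_mult_one_minus_power_pos[OF assms(1-4)])
  have log_concave: "(m (Suc a) (Suc b))\<^sup>2 \<le> m (Suc (Suc a)) b * m a (Suc (Suc b))"
    unfolding m_def by (rule integral_power_mult_one_minus_power_log_concave[OF assms(1-3)])
  have "y + 1 = Suc (Suc a)" "n - (y + 1) = b" "y - 1 = a" "n - (y - 1) = Suc (Suc b)"
    using y ny by auto
  then have q: "binom_out M n (y + 1) = real (n choose (y + 1)) * m (Suc (Suc a)) b"
      "binom_out M n y = real (n choose y) * m (Suc a) (Suc b)"
      "binom_out M n (y - 1) = real (n choose (y - 1)) * m a (Suc (Suc b))"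
    using y ny by (simp_all add: binom_out_eq_choose_times_integral m_def)
  define r where "r = real (y * (n - y)) / real ((y + 1) * (n - y + 1))"
  have "(n choose (y + 1)) * (n choose (y - 1)) * ((y + 1) * (n - y + 1))
      = (n choose y)\<^sup>2 * (y * (n - y))"
    using assms(5,6) by (intro binomial_ratio_identity) simp_all
  then have identity: "real (n choose (y + 1)) * real (n choose (y - 1)) * real ((y + 1) * (n - y + 1))
      = (real (n choose y))\<^sup>2 * real (y * (n - y))"
    by (simp only: of_nat_mult[symmetric] of_nat_power[symmetric] of_nat_eq_iff)
  have choose_ne: "real (n choose y) \<noteq> 0" and weight_ne: "real ((y + 1) * (n - y + 1)) \<noteq> 0"
    using assms(6) by (simp_all only: of_nat_eq_0_iff) simp_all
  have choose_ratio:
    "real (n choose (y + 1)) * real (n choose (y - 1)) / (real (n choose y))\<^sup>2 = r"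
    unfolding r_def frac_eq_eq[OF power_not_zero[OF choose_ne] weight_ne] identity
    by (rule mult.commute)
  have "r = r * 1" by simp
  also have "\<dots> \<le> r * (m (Suc (Suc a)) b * m a (Suc (Suc b)) / (m (Suc a) (Suc b))\<^sup>2)"
    using log_concave m_pos[of "Suc a" "Suc b"] by (intro mult_left_mono) (simp_all add: r_def)
  also have "\<dots> = binom_out M n (y + 1) * binom_out M n (y - 1) / (binom_out M n y)\<^sup>2"
    unfolding q choose_ratio[symmetric] power_mult_distrib times_divide_times_eq by (simp only: mult_ac)
  finally show ?thesis unfolding r_def .
qed

theorem mainTheorem13:
  fixes M :: "real measure" and n :: nat
  assumes "n \<ge> 2"
    and "prob_space M"
    and "sets M = sets borel"
    and "measure M {0..1} = 1"
    and "measure M {0<..<1} > 0"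
  shows "(\<forall>y\<le>n. binom_out M n y > 0) \<and>
         (\<forall>y\<in>{1..n-1}. binom_out M n (y+1) * binom_out M n (y-1) / (binom_out M n y)^2
            \<ge> real (y * (n - y)) / real ((y + 1) * (n - y + 1)))"
proof -
  have finite: "finite_measure M"
    using assms(2) by (simp add: prob_space_def)
  have support: "AE x in M. x \<in> {0..1}"
    using prob_space.AE_prob_1[OF assms(2,4)] .
  note hyps = finite assms(3) support assms(5)
  show ?thesis
  proof (intro conjI allI ballI impI)
    show "binom_out M n y > 0" if "y \<le> n" for y
      using binom_out_pos[OF hyps that] .
    show "binom_out M n (y + 1) * binom_out M n (y - 1) / (binom_out M n y)\<^sup>2
        \<ge> real (y * (n - y)) / real ((y + 1) * (n - y + 1))" if "y \<in> {1..n - 1}" for y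
      using that assms(1) by (intro binom_out_ratio_ge[OF hyps]) auto
  qed
qed

end
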